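(* Let $G$ be a group and $N\subseteq G$ a normal subgroup. If $G$ has no non-trivial narrow normal subgroups, then the center $Z(N)$ of $N$ is trivial.
   Context: A group is narrow if it contains no subgroup isomorphic to the free group $F_2$ of rank $2$. *)

theory Defs
  imports "HOL-Algebra.Algebra"
begin

text \<open>The free group of rank 2 as reduced words. A letter is a pair (generator, sign):
  generator False = a, True = b; sign True = positive exponent, False = inverse.\<close>

type_synonym letter = "bool \<times> bool"

definition inv_letter :: "letter \<Rightarrow> letter" where
  "inv_letter x = (fst x, \<not> snd x)"

fun red_cons :: "letter \<Rightarrow> letter list \<Rightarrow> letter list" where
  "red_cons x [] = [x]"
| "red_cons x (y # ys) = (if y = inv_letter x then ys else x # y # ys)"

definition reduce_word :: "letter list \<Rightarrow> letter list" where
  "reduce_word w = foldr red_cons w []"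

definition reduced_word :: "letter list \<Rightarrow> bool" where
  "reduced_word w \<longleftrightarrow> (\<forall>i. Suc i < length w \<longrightarrow> w ! Suc i \<noteq> inv_letter (w ! i))"

definition free_group2 :: "letter list monoid" where
  "free_group2 = \<lparr>carrier = {w. reduced_word w}, monoid.mult = (\<lambda>u v. reduce_word (u @ v)), one = []\<rparr>"

definition narrow :: "('a, 'b) monoid_scheme \<Rightarrow> bool" where
  "narrow K \<longleftrightarrow> \<not> (\<exists>H. subgroup H K \<and> K\<lparr>carrier := H\<rparr> \<cong> free_group2)"

definition group_center :: "('a, 'b) monoid_scheme \<Rightarrow> 'a set" where
  "group_center K = {z \<in> carrier K. \<forall>x \<in> carrier K. z \<otimes>\<^bsub>K\<^esub> x = x \<otimes>\<^bsub>K\<^esub> z}"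

end

theory Submission
  imports Defs
begin

text \<open>Conjugation by an element of G maps the normal subgroup N onto itself and hence
  maps its centre Z(N) onto itself, so Z(N) is normal in G. Being abelian, Z(N) is narrow,
  because F_2 is not abelian and abelianness passes to subgroups and isomorphic copies.
  The hypothesis on G therefore forces Z(N) to be trivial.\<close>

lemma hom_onto_preserves_commute:
  assumes h: "h \<in> hom A B" "h ` carrier A = carrier B"
    and comm: "\<And>x y. x \<in> carrier A \<Longrightarrow> y \<in> carrier A \<Longrightarrow> x \<otimes>\<^bsub>A\<^esub> y = y \<otimes>\<^bsub>A\<^esub> x"
    and "u \<in> carrier B" "v \<in> carrier B"
  shows "u \<otimes>\<^bsub>B\<^esub> v = v \<otimes>\<^bsub>B\<^esub> u"
proof -
  obtain x y where "x \<in> carrier A" "y \<in> carrier A" "u = h x" "v = h y"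
    using h(2) assms(4,5) by blast
  then show ?thesis
    using h(1) comm by (metis hom_mult)
qed

lemma free_group2_not_commutative:
  "\<exists>u\<in>carrier free_group2. \<exists>v\<in>carrier free_group2.
     u \<otimes>\<^bsub>free_group2\<^esub> v \<noteq> v \<otimes>\<^bsub>free_group2\<^esub> u"
proof (intro bexI)
  show "[(False,True)] \<otimes>\<^bsub>free_group2\<^esub> [(True,True)] \<noteq> [(True,True)] \<otimes>\<^bsub>free_group2\<^esub> [(False,True)]"
    by (simp add: free_group2_def reduce_word_def inv_letter_def)
qed (auto simp: free_group2_def reduced_word_def)

lemma commutative_imp_narrow:
  assumes "\<And>x y. x \<in> carrier K \<Longrightarrow> y \<in> carrier K \<Longrightarrow> x \<otimes>\<^bsub>K\<^esub> y = y \<otimes>\<^bsub>K\<^esub> x"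
  shows "narrow K"
  unfolding narrow_def
proof
  assume "\<exists>H. subgroup H K \<and> K\<lparr>carrier := H\<rparr> \<cong> free_group2"
  then obtain H h where H: "subgroup H K" and h: "h \<in> iso (K\<lparr>carrier := H\<rparr>) free_group2"
    unfolding is_iso_def by blast
  have "u \<otimes>\<^bsub>free_group2\<^esub> v = v \<otimes>\<^bsub>free_group2\<^esub> u"
    if "u \<in> carrier free_group2" "v \<in> carrier free_group2" for u v
  proof (rule hom_onto_preserves_commute[OF _ _ _ that])
    show "h \<in> hom (K\<lparr>carrier := H\<rparr>) free_group2"
      and "h ` carrier (K\<lparr>carrier := H\<rparr>) = carrier free_group2"
      using h by (auto simp: iso_def bij_betw_def)
    show "x \<otimes>\<^bsub>K\<lparr>carrier := H\<rparr>\<^esub> y = y \<otimes>\<^bsub>K\<lparr>carrier := H\<rparr>\<^esub> x"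
      if "x \<in> carrier (K\<lparr>carrier := H\<rparr>)" "y \<in> carrier (K\<lparr>carrier := H\<rparr>)" for x y
      using that assms subgroup.subset[OF H] by auto
  qed
  with free_group2_not_commutative show False by blast
qed

lemma narrow_center: "narrow (K\<lparr>carrier := group_center K\<rparr>)"
proof (rule commutative_imp_narrow)
  fix x y
  assume "x \<in> carrier (K\<lparr>carrier := group_center K\<rparr>)"
    and "y \<in> carrier (K\<lparr>carrier := group_center K\<rparr>)"
  then have "x \<in> group_center K" "y \<in> carrier K"
    by (simp_all add: group_center_def)
  then have "x \<otimes>\<^bsub>K\<^esub> y = y \<otimes>\<^bsub>K\<^esub> x"
    unfolding group_center_def by blast
  then show "x \<otimes>\<^bsub>K\<lparr>carrier := group_center K\<rparr>\<^esub> y = y \<otimes>\<^bsub>K\<lparr>carrier := group_center K\<rparr>\<^esub> x"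
    by simp
qed

lemma (in group) commute_imp_inv_commute:
  assumes "a \<otimes> x = x \<otimes> a" "a \<in> carrier G" "x \<in> carrier G"
  shows "inv a \<otimes> x = x \<otimes> inv a"
proof -
  have "inv a \<otimes> x = inv a \<otimes> (x \<otimes> a) \<otimes> inv a"
    using assms(2,3) by (simp add: m_assoc)
  also have "\<dots> = inv a \<otimes> (a \<otimes> x) \<otimes> inv a"
    by (simp add: assms(1))
  also have "\<dots> = x \<otimes> inv a"
    using assms(2,3) by (simp add: m_assoc [symmetric])
  finally show ?thesis .
qed

lemma (in group) commute_conj_imp_conj_commute:
  assumes "z \<otimes> (inv g \<otimes> x \<otimes> g) = (inv g \<otimes> x \<otimes> g) \<otimes> z"
    and "g \<in> carrier G" "z \<in> carrier G" "x \<in> carrier G"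
  shows "g \<otimes> z \<otimes> inv g \<otimes> x = x \<otimes> (g \<otimes> z \<otimes> inv g)"
proof -
  have "g \<otimes> z \<otimes> inv g \<otimes> x = g \<otimes> (z \<otimes> (inv g \<otimes> x \<otimes> g)) \<otimes> inv g"
    using assms(2-) by (simp add: m_assoc)
  also have "\<dots> = g \<otimes> ((inv g \<otimes> x \<otimes> g) \<otimes> z) \<otimes> inv g"
    by (simp add: assms(1))
  also have "\<dots> = x \<otimes> (g \<otimes> z \<otimes> inv g)"
    using assms(2-) by (simp add: m_assoc [symmetric])
  finally show ?thesis .
qed

lemma mem_group_center_restrict:
  "z \<in> group_center (G\<lparr>carrier := N\<rparr>) \<longleftrightarrow> z \<in> N \<and> (\<forall>x\<in>N. z \<otimes>\<^bsub>G\<^esub> x = x \<otimes>\<^bsub>G\<^esub> z)"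
  by (simp add: group_center_def)

lemma (in group) subgroup_center_of_subgroup:
  assumes "subgroup N G"
  shows "subgroup (group_center (G\<lparr>carrier := N\<rparr>)) G"
proof -
  have N: "N \<subseteq> carrier G"
    using assms by (rule subgroup.subset)
  show ?thesis
  proof (rule subgroupI)
    show "group_center (G\<lparr>carrier := N\<rparr>) \<subseteq> carrier G"
      using N by (auto simp: mem_group_center_restrict)
    have "\<one> \<in> group_center (G\<lparr>carrier := N\<rparr>)"
      using N subgroup.one_closed[OF assms] by (auto simp: mem_group_center_restrict)
    then show "group_center (G\<lparr>carrier := N\<rparr>) \<noteq> {}"
      by blast
  next
    fix a b
    assume "a \<in> group_center (G\<lparr>carrier := N\<rparr>)" "b \<in> group_center (G\<lparr>carrier := N\<rparr>)"
    \<comment> \<open>not simp: as rewrite rules, the commutation laws of a and b turn a \<otimes> b and b \<otimes> a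
      into each other forever\<close>
    then have a: "a \<in> N" "\<And>x. x \<in> N \<Longrightarrow> a \<otimes> x = x \<otimes> a"
      and b: "b \<in> N" "\<And>x. x \<in> N \<Longrightarrow> b \<otimes> x = x \<otimes> b"
      unfolding mem_group_center_restrict by blast+
    have "inv a \<otimes> x = x \<otimes> inv a" if "x \<in> N" for x
      using that a N by (intro commute_imp_inv_commute a(2)) auto
    then show "inv a \<in> group_center (G\<lparr>carrier := N\<rparr>)"
      using a(1) subgroup.m_inv_closed[OF assms] by (simp add: mem_group_center_restrict)
    have "a \<otimes> b \<otimes> x = x \<otimes> (a \<otimes> b)" if x: "x \<in> N" for x
    proof -
      have carrier: "a \<in> carrier G" "b \<in> carrier G" "x \<in> carrier G"
        using a(1) b(1) x N by auto
      have "a \<otimes> b \<otimes> x = a \<otimes> (x \<otimes> b)"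
        using carrier b(2)[OF x] by (simp add: m_assoc)
      also have "\<dots> = (x \<otimes> a) \<otimes> b"
        using carrier a(2)[OF x] by (simp add: m_assoc [symmetric])
      also have "\<dots> = x \<otimes> (a \<otimes> b)"
        using carrier by (simp add: m_assoc)
      finally show ?thesis .
    qed
    then show "a \<otimes> b \<in> group_center (G\<lparr>carrier := N\<rparr>)"
      using a(1) b(1) subgroup.m_closed[OF assms] by (simp add: mem_group_center_restrict)
  qed
qed

lemma (in group) normal_center_of_normal:
  assumes "N \<lhd> G"
  shows "group_center (G\<lparr>carrier := N\<rparr>) \<lhd> G"
proof (rule normal_invI)
  have N: "subgroup N G"
    using assms by (rule normal_imp_subgroup)
  then show "subgroup (group_center (G\<lparr>carrier := N\<rparr>)) G"
    by (rule subgroup_center_of_subgroup)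
  have conj_closed: "h \<otimes> n \<otimes> inv h \<in> N" if "h \<in> carrier G" "n \<in> N" for h n
    using assms that by (simp add: normal_inv_iff)
  fix g z assume g: "g \<in> carrier G" and "z \<in> group_center (G\<lparr>carrier := N\<rparr>)"
  then have z: "z \<in> N" "\<And>x. x \<in> N \<Longrightarrow> z \<otimes> x = x \<otimes> z"
    unfolding mem_group_center_restrict by blast+
  have "g \<otimes> z \<otimes> inv g \<otimes> x = x \<otimes> (g \<otimes> z \<otimes> inv g)" if x: "x \<in> N" for x
  proof (rule commute_conj_imp_conj_commute)
    have "inv g \<otimes> x \<otimes> g \<in> N"
      using conj_closed[of "inv g" x] g x by simp
    then show "z \<otimes> (inv g \<otimes> x \<otimes> g) = (inv g \<otimes> x \<otimes> g) \<otimes> z"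
      by (rule z(2))
  qed (use g z(1) x subgroup.subset[OF N] in auto)
  then show "g \<otimes> z \<otimes> inv g \<in> group_center (G\<lparr>carrier := N\<rparr>)"
    using conj_closed[OF g z(1)] by (simp add: mem_group_center_restrict)
qed

theorem proposition3p7:
  fixes G :: "('a, 'b) monoid_scheme" and N :: "'a set"
  assumes "group G"
    and "N \<lhd> G"
    and "\<And>M. M \<lhd> G \<Longrightarrow> narrow (G\<lparr>carrier := M\<rparr>) \<Longrightarrow> M = {\<one>\<^bsub>G\<^esub>}"
  shows "group_center (G\<lparr>carrier := N\<rparr>) = {\<one>\<^bsub>G\<^esub>}"
proof (rule assms(3))
  show "group_center (G\<lparr>carrier := N\<rparr>) \<lhd> G"
    using assms(2) by (rule group.normal_center_of_normal[OF assms(1)])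
  show "narrow (G\<lparr>carrier := group_center (G\<lparr>carrier := N\<rparr>)\<rparr>)"
    using narrow_center[of "G\<lparr>carrier := N\<rparr>"] by simp
qed

end
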